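(* Let $R$ be a unital associative commutative ring such that $\frac16\in R$, and let $A$ be an associative $R$-algebra. Let $k>0$ be an integer and let $m_1,\dots,m_k$ be odd positive integers. Put $N_k=\sum_{i=1}^k m_i-k+1$. Then \[ T^{(m_1)}(A)\cdots T^{(m_k)}(A)\subseteq T^{(N_k)}(A). \]
   Context: For an associative algebra $A$, left-normed commutators are defined by $[a_1,a_2]=a_1a_2-a_2a_1$ and $[a_1,\dots,a_{n-1},a_n]=[[a_1,\dots,a_{n-1}],a_n]$ for $n\ge 3$. For $n\ge 2$, $T^{(n)}(A)$ denotes the two-sided ideal of $A$ generated by all commutators $[a_1,\dots,a_n]$ with $a_i\in A$, and $T^{(1)}(A)=A$. *)

theory Defs
  imports Main
begin

definition is_algebra :: "('r::comm_ring_1 \<Rightarrow> 'a::ring \<Rightarrow> 'a) \<Rightarrow> bool" where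
  "is_algebra smult \<longleftrightarrow>
     (\<forall>r s a. smult (r + s) a = smult r a + smult s a) \<and>
     (\<forall>r a b. smult r (a + b) = smult r a + smult r b) \<and>
     (\<forall>r s a. smult (r * s) a = smult r (smult s a)) \<and>
     (\<forall>a. smult 1 a = a) \<and>
     (\<forall>r a b. smult r (a * b) = smult r a * b) \<and>
     (\<forall>r a b. smult r (a * b) = a * smult r b)"

definition alg_ideal :: "('r::comm_ring_1 \<Rightarrow> 'a::ring \<Rightarrow> 'a) \<Rightarrow> 'a set \<Rightarrow> bool" where
  "alg_ideal smult I \<longleftrightarrow>
     0 \<in> I \<and> (\<forall>x\<in>I. \<forall>y\<in>I. x + y \<in> I) \<and> (\<forall>x\<in>I. - x \<in> I) \<and>
     (\<forall>r. \<forall>x\<in>I. smult r x \<in> I) \<and> (\<forall>a. \<forall>x\<in>I. a * x \<in> I \<and> x * a \<in> I)"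

definition ideal_gen :: "('r::comm_ring_1 \<Rightarrow> 'a::ring \<Rightarrow> 'a) \<Rightarrow> 'a set \<Rightarrow> 'a set" where
  "ideal_gen smult S = \<Inter>{I. alg_ideal smult I \<and> S \<subseteq> I}"

fun lcomm :: "'a::ring list \<Rightarrow> 'a" where
  "lcomm [] = 0"
| "lcomm (x # xs) = foldl (\<lambda>u v. u * v - v * u) x xs"

definition Tn :: "('r::comm_ring_1 \<Rightarrow> 'a::ring \<Rightarrow> 'a) \<Rightarrow> nat \<Rightarrow> 'a set" where
  "Tn smult n = (if n \<le> 1 then UNIV
                 else ideal_gen smult {lcomm xs | xs. length xs = n})"

text \<open>Product of a nonempty list of elements (no unit needed).\<close>
fun lprod :: "'a::ring list \<Rightarrow> 'a" where
  "lprod [] = 0"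
| "lprod (x # xs) = foldl (*) x xs"

definition submod :: "('r::comm_ring_1 \<Rightarrow> 'a::ring \<Rightarrow> 'a) \<Rightarrow> 'a set \<Rightarrow> bool" where
  "submod smult M \<longleftrightarrow>
     0 \<in> M \<and> (\<forall>x\<in>M. \<forall>y\<in>M. x + y \<in> M) \<and> (\<forall>x\<in>M. - x \<in> M) \<and>
     (\<forall>r. \<forall>x\<in>M. smult r x \<in> M)"

definition set_product :: "('r::comm_ring_1 \<Rightarrow> 'a::ring \<Rightarrow> 'a) \<Rightarrow> 'a set list \<Rightarrow> 'a set" where
  "set_product smult Is =
     \<Inter>{M. submod smult M \<and>
          {lprod xs | xs. length xs = length Is \<and> (\<forall>i<length Is. xs ! i \<in> Is ! i)} \<subseteq> M}"

end

theory Submission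
  imports Defs
begin

text \<open>Write L_n for the R-span of the left-normed commutators of length n. Then
  T^(n) = L_n + A L_n, because c a = a c + [c, a] and [L_n, A] \<subseteq> L_(n+1) \<subseteq> L_n.
  The heart of the matter is T^(k) T^(n) \<subseteq> T^(k+n-1) for odd k. By linearity it reduces to
  products c d with c \<in> L_k and d = [x, y], d \<in> L_n, and it is proved by induction on k in steps
  of two. For k = 3 an identity writes 3 [a, b, c] [x, y] as a combination of commutators of degree
  n + 2 multiplied by elements of A; this is where 1/3 \<in> R is used. For c = [w, b, c'] a second
  identity shows that, modulo such terms, c [x, y] equals w [x, c', b, y] - [w [x, c'], b, y], and
  both lie in T^(k+n-1) by induction, the second because [T^(j), A, A] \<subseteq> T^(j+2). The theorem then
  follows by multiplying the factors together from the left, each step adding an odd index.\<close>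

definition comm :: "'a::ring \<Rightarrow> 'a \<Rightarrow> 'a" where
  "comm u v = u * v - v * u"

lemma comm_add_left: "comm (u + v) w = comm u w + comm v w"
  by (simp add: comm_def algebra_simps)

lemma comm_add_right: "comm u (v + w) = comm u v + comm u w"
  by (simp add: comm_def algebra_simps)

lemma comm_minus_left: "comm (- u) v = - comm u v"
  by (simp add: comm_def)

lemma comm_minus_right: "comm u (- v) = - comm u v"
  by (simp add: comm_def)

lemma comm_zero_left [simp]: "comm 0 v = 0"
  and comm_zero_right [simp]: "comm u 0 = 0"
  by (simp_all add: comm_def)

lemma comm_Jacobi: "comm u (comm v w) = comm (comm u v) w - comm (comm u w) v"
  by (simp add: comm_def algebra_simps)

lemma lcomm_Cons_Cons: "lcomm (x # y # zs) = lcomm (comm x y # zs)"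
  by (simp add: comm_def)

lemma lcomm_snoc: "xs \<noteq> [] \<Longrightarrow> lcomm (xs @ [y]) = comm (lcomm xs) y"
  by (cases xs) (simp_all add: comm_def)

lemma lcomm_snoc_snoc: "xs \<noteq> [] \<Longrightarrow> lcomm (xs @ [y, z]) = comm (comm (lcomm xs) y) z"
  using lcomm_snoc[of xs y] lcomm_snoc[of "xs @ [y]" z] by simp

lemma foldl_mult_assoc: "foldl (*) (x * y) zs = x * foldl (*) y (zs :: 'a::semigroup_mult list)"
  by (induction zs arbitrary: y) (simp_all add: mult.assoc)

lemma lprod_Cons: "xs \<noteq> [] \<Longrightarrow> lprod (x # xs) = x * lprod xs"
  by (cases xs) (simp_all add: foldl_mult_assoc)

lemma length_le_sum_list: "(\<And>m. m \<in> set ms \<Longrightarrow> 0 < m) \<Longrightarrow> length ms \<le> sum_list (ms :: nat list)"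
  by (induction ms) fastforce+

text \<open>The three expansions below were found by computer. Apart from the two summands of the last
  one in which w is multiplied by something, every summand is a left-normed commutator, possibly
  multiplied by one further element, in which each variable occurs exactly once.\<close>

lemma comm3_mult_comm_identity:
  fixes a b c x y :: "'a::ring"
  defines "t \<equiv> comm (comm a b) c * comm x y"
  shows "t + t + t =
     - (comm (comm (comm a x) c) y * b) - comm (comm (comm a x) c) y * b
     - comm (comm (comm a y) b) x * c - y * comm (comm (comm a b) x) c
     - y * comm (comm (comm a b) x) c + comm (comm (comm b x) y) c * a
     - comm (comm (comm b (a * c)) x) y - comm (comm (comm a b) x) y * c
     - a * comm (comm (comm b x) c) y - a * comm (comm (comm b x) c) y
     - comm (comm (comm a y) c) x * b - comm (comm (comm a y) c) x * b
     + comm (comm (comm b x) c) y * a + comm (comm (comm b x) c) y * a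
     + comm (comm (comm b c) (a * y)) x + b * comm (comm (comm a c) y) x
     + b * comm (comm (comm a y) c) x - c * comm (comm (comm a b) x) y
     + y * comm (comm (comm a c) b) x - comm (comm (comm a x) b) c * y
     - c * comm (comm (comm a x) y) b - c * comm (comm (comm a x) y) b
     - comm (comm (comm a x) b) y * c + comm (comm (comm b y) c) x * a
     + comm (comm (comm b y) c) x * a + comm (comm (comm b (a * y)) x) c
     + comm (comm (comm a (b * c)) x) y - b * comm (comm (comm a y) x) c
     - comm (comm (comm a (c * y)) b) x + a * comm (comm (comm b c) x) y
     + a * comm (comm (comm b c) x) y - b * comm (comm (comm a c) x) y
     - b * comm (comm (comm a c) x) y + c * comm (comm (comm a y) b) x
     + c * comm (comm (comm a y) b) x - comm (comm (comm b y) x) c * a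
     - comm (comm (comm b y) x) c * a - a * comm (comm (comm b y) c) x
     + a * comm (comm (comm b x) y) c - b * comm (comm (comm a x) y) c
     - comm (comm (comm a c) (b * y)) x - comm (comm (comm b x) (a * y)) c
     - comm (comm (comm b x) (a * y)) c + comm (comm (comm a c) x) y * b
     + comm (comm (comm a x) (c * y)) b - c * comm (comm (comm a y) x) b
     - c * comm (comm (comm a y) x) b + comm (comm (comm a x) y) b * c
     + comm (comm (comm a (b * y)) c) x + y * comm (comm (comm a b) c) x
     + b * comm (comm (comm a x) c) y + b * comm (comm (comm a x) c) y
     + comm (comm (comm a (c * y)) x) b + comm (comm (comm a b) x) c * y
     + comm (comm (comm a b) x) c * y - comm (comm (comm a (b * y)) x) c
     + y * comm (comm (comm a x) b) c + comm (comm (comm a y) x) b * c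
     + comm (comm (comm a y) x) c * b + comm (comm (comm a y) x) c * b
     - comm (comm (comm a b) (c * y)) x - comm (comm (comm a b) (c * y)) x
     - a * comm (comm (comm b c) y) x - comm (comm (comm a x) y) c * b
     - comm (comm (comm b c) x) y * a - y * comm (comm (comm a x) c) b
     + c * comm (comm (comm a x) b) y - y * comm (comm (comm a c) x) b
     + comm (comm (comm a x) (b * y)) c + comm (comm (comm a x) (b * y)) c
     - comm (comm (comm b (a * y)) c) x + a * comm (comm (comm b y) x) c
     + c * comm (comm (comm a b) y) x + c * comm (comm (comm a b) y) x"
  unfolding t_def comm_def by (simp add: algebra_simps)

lemma comm_comm_mult_identity:
  fixes x c u v :: "'a::ring"
  shows "comm (comm (x * c) u) v =
     comm (comm x c) u * v + comm (comm x u) v * c - comm (comm u c) v * x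
     + u * comm (comm x v) c - v * comm (comm x c) u - comm (comm x (u * v)) c
     + v * comm (comm x u) c"
  unfolding comm_def by (simp add: algebra_simps)

lemma comm2_mult_comm_identity:
  fixes w b c x y :: "'a::ring"
  shows "comm (comm w b) c * comm x y =
     - (comm (comm (comm c (b * y)) w) x) - comm (comm (comm b x) c) w * y
     + c * comm (comm (comm b y) w) x - comm (comm (comm b w) c) x * y
     + comm (comm (comm c w) (b * y)) x + comm (comm (comm c x) (b * y)) w
     - c * comm (comm (comm b w) y) x - comm (comm (comm b y) w) x * c
     + comm (comm (comm c (y * b)) w) x + comm (comm (comm b c) x) w * y
     - comm (comm (comm c w) (y * b)) x - comm (comm (comm c x) y) w * b
     - b * comm (comm (comm c x) w) y + comm (comm (comm c x) w) y * b
     + w * comm (comm (comm x c) b) y - comm (comm (w * comm x c) b) y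
     + comm (comm (comm b w) (c * y)) x"
  unfolding comm_def by (simp add: algebra_simps)

locale assoc_algebra =
  fixes smult :: "'r::comm_ring_1 \<Rightarrow> 'a::ring \<Rightarrow> 'a"
  assumes is_algebra: "is_algebra smult"
begin

lemma smult_add_left: "smult (r + s) a = smult r a + smult s a"
  using is_algebra by (simp add: is_algebra_def)

lemma smult_add_right: "smult r (a + b) = smult r a + smult r b"
  using is_algebra by (simp add: is_algebra_def)

lemma smult_smult: "smult (r * s) a = smult r (smult s a)"
  using is_algebra by (simp add: is_algebra_def)

lemma smult_one: "smult 1 a = a"
  using is_algebra by (simp add: is_algebra_def)

lemma smult_mult_left: "smult r (a * b) = smult r a * b"
  using is_algebra by (simp add: is_algebra_def)

lemma smult_mult_right: "smult r (a * b) = a * smult r b"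
  using is_algebra unfolding is_algebra_def by blast

lemma smult_zero_right: "smult r 0 = 0"
  using smult_add_right[of r 0 0] by simp

lemma smult_minus_right: "smult r (- a) = - smult r a"
  using smult_add_right[of r a "- a"] by (simp add: smult_zero_right eq_neg_iff_add_eq_0 add.commute)

lemma smult_diff_right: "smult r (a - b) = smult r a - smult r b"
  using smult_add_right[of r a "- b"] by (simp add: smult_minus_right)

lemma smult_comm_left: "smult r (comm u v) = comm (smult r u) v"
  using smult_mult_left[of r u v] smult_mult_right[of r v u] by (simp add: comm_def smult_diff_right)

lemma smult_comm_right: "smult r (comm u v) = comm u (smult r v)"
  using smult_mult_right[of r u v] smult_mult_left[of r v u] by (simp add: comm_def smult_diff_right)

abbreviation T :: "nat \<Rightarrow> 'a set" where
  "T n \<equiv> Tn smult n"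

lemma alg_ideal_Tn: "alg_ideal smult (T n)"
proof -
  have "alg_ideal smult UNIV" "alg_ideal smult (ideal_gen smult S)" for S
    unfolding alg_ideal_def ideal_gen_def by blast+
  then show ?thesis
    unfolding Tn_def by simp
qed

lemma Tn_UNIV: "n \<le> 1 \<Longrightarrow> T n = UNIV"
  by (simp add: Tn_def)

lemma Tn_zero: "0 \<in> T n"
  and Tn_add: "u \<in> T n \<Longrightarrow> v \<in> T n \<Longrightarrow> u + v \<in> T n"
  and Tn_minus: "u \<in> T n \<Longrightarrow> - u \<in> T n"
  and Tn_smult: "u \<in> T n \<Longrightarrow> smult r u \<in> T n"
  and Tn_mult_left: "u \<in> T n \<Longrightarrow> a * u \<in> T n"
  and Tn_mult_right: "u \<in> T n \<Longrightarrow> u * a \<in> T n"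
  using alg_ideal_Tn[of n] unfolding alg_ideal_def by blast+

lemma Tn_diff: "u \<in> T n \<Longrightarrow> v \<in> T n \<Longrightarrow> u - v \<in> T n"
  by (metis Tn_add Tn_minus diff_conv_add_uminus)

inductive_set comm_span :: "nat \<Rightarrow> 'a set" for n where
  lcomm: "length xs = n \<Longrightarrow> lcomm xs \<in> comm_span n"
| zero: "0 \<in> comm_span n"
| add: "u \<in> comm_span n \<Longrightarrow> v \<in> comm_span n \<Longrightarrow> u + v \<in> comm_span n"
| minus: "u \<in> comm_span n \<Longrightarrow> - u \<in> comm_span n"
| smult: "u \<in> comm_span n \<Longrightarrow> smult r u \<in> comm_span n"

lemma comm_span_diff: "u \<in> comm_span n \<Longrightarrow> v \<in> comm_span n \<Longrightarrow> u - v \<in> comm_span n"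
  by (metis comm_span.add comm_span.minus diff_conv_add_uminus)

lemma comm_span_one: "x \<in> comm_span 1"
  using comm_span.lcomm[of "[x]"] by simp

lemma comm_span_comm_right: "u \<in> comm_span n \<Longrightarrow> comm u y \<in> comm_span (Suc n)"
proof (induction rule: comm_span.induct)
  case (lcomm xs)
  show ?case
  proof (cases "xs = []")
    case True
    then show ?thesis by (simp add: comm_span.zero)
  next
    case False
    then show ?thesis
      using comm_span.lcomm[of "xs @ [y]" "Suc n"] lcomm by (simp add: lcomm_snoc)
  qed
qed (simp_all add: comm_add_left comm_minus_left smult_comm_left[symmetric] comm_span.intros)

lemma comm_span_Suc_subset: "u \<in> comm_span (Suc n) \<Longrightarrow> 1 \<le> n \<Longrightarrow> u \<in> comm_span n"
proof (induction rule: comm_span.induct)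
  case (lcomm xs)
  then obtain x y zs where xs: "xs = x # y # zs"
    by (cases xs; cases "tl xs") auto
  with lcomm have "length (comm x y # zs) = n"
    by simp
  then show ?case
    unfolding xs lcomm_Cons_Cons by (rule comm_span.lcomm)
qed (simp_all add: comm_span.intros)

lemma comm_span_antimono:
  assumes "u \<in> comm_span n" "1 \<le> m" "m \<le> n"
  shows "u \<in> comm_span m"
  using assms(3,1)
proof (induction n rule: dec_induct)
  case (step k)
  then show ?case
    using comm_span_Suc_subset assms(2) by auto
qed

lemma comm_span_comm:
  assumes "u \<in> comm_span p" "v \<in> comm_span q"
  shows "comm u v \<in> comm_span (p + q)"
  using assms
proof (induction q arbitrary: u v p rule: less_induct)
  case (less q)
  from less.prems(2) show ?case
  proof (induction rule: comm_span.induct)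
    case (lcomm xs)
    consider "xs = []" | y where "xs = [y]" | ys y where "xs = ys @ [y]" "ys \<noteq> []"
      by (metis rev_exhaust append_Nil)
    then show ?case
    proof cases
      case 1
      then show ?thesis by (simp add: comm_span.zero)
    next
      case 2
      with lcomm have "q = 1"
        by simp
      with 2 show ?thesis
        using comm_span_comm_right[OF less.prems(1)] by simp
    next
      case 3
      let ?w = "lcomm ys"
      have w: "?w \<in> comm_span (q - 1)" and "q - 1 < q"
        using 3 lcomm comm_span.lcomm[of ys] by auto
      then have "comm u ?w \<in> comm_span (p + (q - 1))"
        and "comm (comm u y) ?w \<in> comm_span (Suc p + (q - 1))"
        using less.IH less.prems(1) comm_span_comm_right by blast+
      moreover have "Suc (p + (q - 1)) = p + q" "Suc p + (q - 1) = p + q"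
        using 3 lcomm by auto
      ultimately have "comm (comm u ?w) y \<in> comm_span (p + q)"
        and "comm (comm u y) ?w \<in> comm_span (p + q)"
        by (metis comm_span_comm_right)+
      then show ?thesis
        using 3 by (simp add: lcomm_snoc comm_Jacobi comm_span_diff)
    qed
  qed (simp_all add: comm_add_right comm_minus_right smult_comm_right[symmetric] comm_span.intros)
qed

lemma comm_span_subset_Tn: "u \<in> comm_span n \<Longrightarrow> u \<in> T n"
proof (induction rule: comm_span.induct)
  case (lcomm xs)
  have "lcomm xs \<in> ideal_gen smult {lcomm xs | xs. length xs = n}"
    using lcomm unfolding ideal_gen_def by blast
  then show ?case
    by (simp add: Tn_def)
qed (simp_all add: Tn_zero Tn_add Tn_minus Tn_smult)

lemma Tn_of_comm_span: "u \<in> comm_span p \<Longrightarrow> n \<le> p \<Longrightarrow> u \<in> T n"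
  by (cases "n \<le> 1") (simp_all add: Tn_UNIV comm_span_antimono comm_span_subset_Tn)

lemma Tn_of_comm_span_mult_left: "u \<in> comm_span p \<Longrightarrow> n \<le> p \<Longrightarrow> a * u \<in> T n"
  and Tn_of_comm_span_mult_right: "u \<in> comm_span p \<Longrightarrow> n \<le> p \<Longrightarrow> u * a \<in> T n"
  by (simp_all add: Tn_of_comm_span Tn_mult_left Tn_mult_right)

lemmas Tn_of_comm_span_monomial =
  Tn_of_comm_span Tn_of_comm_span_mult_left Tn_of_comm_span_mult_right

text \<open>This is L_n + A L_n, which for n \<ge> 1 is already the ideal T^(n).\<close>

inductive_set comm_span_ideal :: "nat \<Rightarrow> 'a set" for n where
  span: "c \<in> comm_span n \<Longrightarrow> c \<in> comm_span_ideal n"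
| mult: "c \<in> comm_span n \<Longrightarrow> x * c \<in> comm_span_ideal n"
| add: "u \<in> comm_span_ideal n \<Longrightarrow> v \<in> comm_span_ideal n \<Longrightarrow> u + v \<in> comm_span_ideal n"

lemma alg_ideal_comm_span_ideal:
  assumes "1 \<le> n"
  shows "alg_ideal smult (comm_span_ideal n)"
proof -
  have comm_mem: "comm c a \<in> comm_span n" if "c \<in> comm_span n" for c a
    using comm_span_Suc_subset[OF comm_span_comm_right[OF that] assms] .
  have "- u \<in> comm_span_ideal n \<and> smult r u \<in> comm_span_ideal n \<and>
      a * u \<in> comm_span_ideal n \<and> u * a \<in> comm_span_ideal n"
    if "u \<in> comm_span_ideal n" for u r a
    using that
  proof (induction rule: comm_span_ideal.induct)
    case (span c)
    have "c * a = a * c + comm c a"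
      by (simp add: comm_def)
    then show ?case
      using span comm_mem by (auto simp: comm_span.intros comm_span_ideal.intros)
  next
    case (mult c x)
    have "x * c * a = (x * a) * c + x * comm c a"
      by (simp add: comm_def algebra_simps)
    moreover have "smult r (x * c) = smult r x * c" "a * (x * c) = (a * x) * c"
      by (simp_all add: smult_mult_left mult.assoc)
    ultimately show ?case
      using mult comm_mem comm_span_ideal.mult[of c n "- x"]
      by (simp add: comm_span_ideal.add comm_span_ideal.mult)
  next
    case (add u v)
    then show ?case
      using comm_span_ideal.add[of "- u" n "- v"]
      by (simp add: distrib_left distrib_right smult_add_right comm_span_ideal.add)
  qed
  then show ?thesis
    unfolding alg_ideal_def using comm_span_ideal.add comm_span_ideal.span comm_span.zero by blast
qed

lemma Tn_subset_comm_span_ideal: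
  assumes "1 \<le> n"
  shows "T n \<subseteq> comm_span_ideal n"
proof (cases "n = 1")
  case True
  then show ?thesis
    using comm_span_ideal.span comm_span_one by blast
next
  case False
  then have "T n = ideal_gen smult {lcomm xs | xs. length xs = n}"
    using assms by (simp add: Tn_def)
  also have "\<dots> \<subseteq> comm_span_ideal n"
    unfolding ideal_gen_def
    using alg_ideal_comm_span_ideal[OF assms] comm_span.lcomm comm_span_ideal.span by blast
  finally show ?thesis .
qed

lemma Tn_mult_comm_span_linear_right:
  assumes "d \<in> comm_span n" "\<And>ys. length ys = n \<Longrightarrow> c * lcomm ys \<in> T N"
  shows "c * d \<in> T N"
  using assms(1)
  by induction
    (auto simp: assms(2) distrib_left smult_mult_right[symmetric] Tn_zero Tn_add Tn_minus Tn_smult)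

lemma Tn_mult_comm_span_bilinear:
  assumes "c \<in> comm_span k" "d \<in> comm_span n"
    and "\<And>xs ys. length xs = k \<Longrightarrow> length ys = n \<Longrightarrow> lcomm xs * lcomm ys \<in> T N"
  shows "c * d \<in> T N"
  using assms(1)
proof induction
  case (lcomm xs)
  then show ?case
    using Tn_mult_comm_span_linear_right[OF assms(2)] assms(3) by blast
qed (auto simp: distrib_right smult_mult_left[symmetric] Tn_zero Tn_add Tn_minus Tn_smult)

lemma lcomm_split_last:
  assumes "length ys = n" "2 \<le> n"
  obtains z y where "z \<in> comm_span (n - 1)" "lcomm ys = comm z y"
proof -
  obtain zs y where ys: "ys = zs @ [y]"
    using assms by (cases ys rule: rev_cases) auto
  with assms have "length zs = n - 1" "zs \<noteq> []"
    by auto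
  then show ?thesis
    using that[of "lcomm zs" y] comm_span.lcomm by (simp add: ys lcomm_snoc)
qed

lemma lcomm_split_last2:
  assumes "length xs = k" "3 \<le> k"
  obtains w b c where "w \<in> comm_span (k - 2)" "lcomm xs = comm (comm w b) c"
proof -
  obtain ys c where xs: "xs = ys @ [c]"
    using assms by (cases xs rule: rev_cases) auto
  moreover obtain ws b where "ys = ws @ [b]"
    using assms xs by (cases ys rule: rev_cases) auto
  ultimately have xs: "xs = ws @ [b, c]"
    by simp
  with assms have "length ws = k - 2" "ws \<noteq> []"
    by auto
  then show ?thesis
    using that[of "lcomm ws" b c] comm_span.lcomm by (simp add: xs lcomm_snoc_snoc)
qed

end

locale assoc_algebra_third = assoc_algebra smult
  for smult :: "'r::comm_ring_1 \<Rightarrow> 'a::ring \<Rightarrow> 'a" +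
  assumes three_invertible: "\<exists>u::'r. 3 * u = 1"
begin

lemma Tn_cancel_three:
  assumes "t + t + t \<in> T n"
  shows "t \<in> T n"
proof -
  obtain u :: 'r where u: "3 * u = 1"
    using three_invertible by blast
  have "smult 3 t = t + t + t"
    using smult_add_left[of 2 1 t] smult_add_left[of 1 1 t] by (simp add: smult_one)
  then have "smult u (t + t + t) = smult (u * 3) t"
    by (simp add: smult_smult)
  also have "\<dots> = t"
    using u by (simp add: mult.commute smult_one)
  finally show ?thesis
    using Tn_smult[OF assms, of u] by simp
qed

lemma comm3_mult_comm_mem:
  assumes x: "x \<in> comm_span m"
  shows "comm (comm a b) c * comm x y \<in> T (m + 3)"
proof (rule Tn_cancel_three)
  show "comm (comm a b) c * comm x y + comm (comm a b) c * comm x y + comm (comm a b) c * comm x y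
      \<in> T (m + 3)"
    unfolding comm3_mult_comm_identity
    by (intro Tn_add Tn_diff Tn_minus;
        (rule Tn_of_comm_span_monomial, (rule comm_span_comm x comm_span_one)+, linarith))
qed

lemma comm_span_3_mult:
  assumes c: "c \<in> comm_span 3" and d: "d \<in> comm_span n" and "1 \<le> n"
  shows "c * d \<in> T (n + 2)"
proof (cases "n = 1")
  case True
  then show ?thesis
    using Tn_of_comm_span_mult_right[OF c] by simp
next
  case False
  with \<open>1 \<le> n\<close> have "2 \<le> n"
    by simp
  show ?thesis
  proof (rule Tn_mult_comm_span_bilinear[OF c d])
    fix xs ys :: "'a list"
    assume xs: "length xs = 3" and ys: "length ys = n"
    obtain a b c' where "lcomm xs = comm (comm a b) c'"
      using lcomm_split_last2[OF xs] by blast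
    moreover obtain z y where "z \<in> comm_span (n - 1)" "lcomm ys = comm z y"
      using lcomm_split_last[OF ys \<open>2 \<le> n\<close>] by blast
    ultimately show "lcomm xs * lcomm ys \<in> T (n + 2)"
      using comm3_mult_comm_mem[of z "n - 1"] \<open>2 \<le> n\<close> by simp
  qed
qed

lemma comm_comm_mem_Tn:
  assumes "z \<in> T j" "1 \<le> j"
  shows "comm (comm z u) v \<in> T (j + 2)"
proof -
  have "z \<in> comm_span_ideal j"
    using assms Tn_subset_comm_span_ideal by blast
  then show ?thesis
  proof induction
    case (span c)
    show ?case
      by (rule Tn_of_comm_span_monomial, (rule comm_span_comm span comm_span_one)+, linarith)
  next
    case (mult c x)
    have "comm (comm x u) v \<in> comm_span (1 + 1 + 1)"
      by (rule comm_span_comm comm_span_one)+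
    then have deg3: "comm (comm x u) v * c \<in> T (j + 2)"
      using comm_span_3_mult mult assms(2) by (simp add: numeral_3_eq_3)
    show ?case
      unfolding comm_comm_mult_identity
      by (intro Tn_add Tn_diff Tn_minus;
          (rule deg3 | rule Tn_of_comm_span_monomial, (rule comm_span_comm mult comm_span_one)+,
            linarith))
  next
    case (add z z')
    then show ?case
      by (simp add: comm_add_left Tn_add)
  qed
qed

lemma comm2_mult_comm_mem:
  assumes w: "w \<in> comm_span k" and x: "x \<in> comm_span m" and "1 \<le> m"
    and w_mult: "\<And>d n. d \<in> comm_span n \<Longrightarrow> 1 \<le> n \<Longrightarrow> w * d \<in> T (k + n - 1)"
  shows "comm (comm w b) c * comm x y \<in> T (k + m + 2)"
proof -
  have "comm (comm (comm x c) b) y \<in> comm_span (m + 1 + 1 + 1)"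
    by (rule comm_span_comm x comm_span_one)+
  then have w_deg: "w * comm (comm (comm x c) b) y \<in> T (k + m + 2)"
    using w_mult by fastforce
  have "comm x c \<in> comm_span (m + 1)"
    by (rule comm_span_comm x comm_span_one)+
  then have "w * comm x c \<in> T (k + m)"
    using w_mult by fastforce
  then have comm_w_deg: "comm (comm (w * comm x c) b) y \<in> T (k + m + 2)"
    using comm_comm_mem_Tn \<open>1 \<le> m\<close> by simp
  show ?thesis
    unfolding comm2_mult_comm_identity
    by (intro Tn_add Tn_diff Tn_minus;
        (rule w_deg comm_w_deg | rule Tn_of_comm_span_monomial, (rule comm_span_comm w x comm_span_one)+,
          linarith))
qed

lemma lcomm_mult_lcomm_mem:
  assumes xs: "length xs = k" "3 \<le> k" and ys: "length ys = n" "2 \<le> n"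
    and prefix_mult: "\<And>w d n'. w \<in> comm_span (k - 2) \<Longrightarrow> d \<in> comm_span n' \<Longrightarrow> 1 \<le> n'
      \<Longrightarrow> w * d \<in> T (k - 2 + n' - 1)"
  shows "lcomm xs * lcomm ys \<in> T (k + n - 1)"
proof -
  obtain w b c where w: "w \<in> comm_span (k - 2)" and xs_eq: "lcomm xs = comm (comm w b) c"
    using lcomm_split_last2[OF xs] by blast
  obtain z y where z: "z \<in> comm_span (n - 1)" and ys_eq: "lcomm ys = comm z y"
    using lcomm_split_last[OF ys] by blast
  have "comm (comm w b) c * comm z y \<in> T (k - 2 + (n - 1) + 2)"
    using comm2_mult_comm_mem[OF w z] prefix_mult[OF w] \<open>2 \<le> n\<close> by simp
  moreover have "k - 2 + (n - 1) + 2 = k + n - 1"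
    using xs ys by simp
  ultimately show ?thesis
    unfolding xs_eq ys_eq by metis
qed

lemma odd_comm_span_mult_comm_span:
  assumes "odd k" "c \<in> comm_span k" "d \<in> comm_span n" "1 \<le> n"
  shows "c * d \<in> T (k + n - 1)"
  using assms
proof (induction k arbitrary: c d n rule: less_induct)
  case (less k)
  have "k = 1 \<or> k = 3 \<or> 5 \<le> k"
    using \<open>odd k\<close> by presburger
  then consider "k = 1" | "k = 3" | "5 \<le> k"
    by blast
  then show ?case
  proof cases
    case 1
    then show ?thesis
      using Tn_of_comm_span_mult_left[OF less.prems(3)] by simp
  next
    case 2
    then show ?thesis
      using comm_span_3_mult less.prems by (simp add: add.commute)
  next
    case 3
    show ?thesis
    proof (cases "n = 1")
      case True
      then show ?thesis
        using Tn_of_comm_span_mult_right[OF less.prems(2)] by simp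
    next
      case False
      with less.prems have "2 \<le> n"
        by simp
      have "w * d \<in> T (k - 2 + n' - 1)"
        if "w \<in> comm_span (k - 2)" "d \<in> comm_span n'" "1 \<le> n'" for w d n'
        using less.IH[of "k - 2"] that 3 \<open>odd k\<close> by simp
      then show ?thesis
        using Tn_mult_comm_span_bilinear[OF less.prems(2,3)] lcomm_mult_lcomm_mem 3 \<open>2 \<le> n\<close>
        by simp
    qed
  qed
qed

lemma odd_comm_span_mult_Tn:
  assumes "odd k" "c \<in> comm_span k" "z \<in> T n" "1 \<le> n"
  shows "c * z \<in> T (k + n - 1)"
proof -
  have "z \<in> comm_span_ideal n"
    using assms Tn_subset_comm_span_ideal by blast
  then show ?thesis
  proof induction
    case (span d)
    then show ?case
      using odd_comm_span_mult_comm_span assms by blast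
  next
    case (mult d x)
    have "c * (x * d) = x * (c * d) + comm c x * d"
      by (simp add: comm_def algebra_simps)
    moreover have "comm c x \<in> comm_span k"
      using comm_span_Suc_subset[OF comm_span_comm_right[OF assms(2)]] odd_pos[OF \<open>odd k\<close>]
      by simp
    ultimately show ?case
      using odd_comm_span_mult_comm_span[OF \<open>odd k\<close> _ mult \<open>1 \<le> n\<close>] assms(2)
      by (simp add: Tn_add Tn_mult_left)
  next
    case (add u v)
    then show ?case
      by (simp add: distrib_left Tn_add)
  qed
qed

lemma odd_Tn_mult_Tn:
  assumes "odd k" "z \<in> T k" "z' \<in> T n" "1 \<le> n"
  shows "z * z' \<in> T (k + n - 1)"
proof -
  have "z \<in> comm_span_ideal k"
    using Tn_subset_comm_span_ideal[of k] assms(2) odd_pos[OF \<open>odd k\<close>] by auto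
  then show ?thesis
  proof induction
    case (span c)
    then show ?case
      using odd_comm_span_mult_Tn assms by blast
  next
    case (mult c x)
    then show ?case
      using odd_comm_span_mult_Tn assms by (simp add: mult.assoc Tn_mult_left)
  next
    case (add u v)
    then show ?case
      by (simp add: distrib_right Tn_add)
  qed
qed

lemma lprod_mem_Tn:
  assumes "list_all2 (\<lambda>x m. x \<in> T m) xs ms" "ms \<noteq> []" "\<forall>m\<in>set ms. odd m"
  shows "lprod xs \<in> T (sum_list ms - length ms + 1)"
  using assms
proof (induction rule: list_all2_induct)
  case Nil
  then show ?case
    by simp
next
  case (Cons x xs m ms)
  show ?case
  proof (cases "ms = []")
    case True
    with Cons show ?thesis
      using odd_pos[of m] by simp
  next
    case False
    with Cons have "xs \<noteq> []" and IH: "lprod xs \<in> T (sum_list ms - length ms + 1)"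
      by (auto dest: list_all2_lengthD)
    have "x * lprod xs \<in> T (m + (sum_list ms - length ms + 1) - 1)"
      by (rule odd_Tn_mult_Tn) (use Cons IH in auto)
    moreover have "length ms \<le> sum_list ms" "0 < m"
      using Cons.prems(2) by (auto intro: length_le_sum_list odd_pos)
    then have "m + (sum_list ms - length ms + 1) - 1 = sum_list (m # ms) - length (m # ms) + 1"
      by simp
    ultimately show ?thesis
      by (metis lprod_Cons \<open>xs \<noteq> []\<close>)
  qed
qed

end

theorem proposition1p3:
  fixes smult :: "'r::comm_ring_1 \<Rightarrow> 'a::ring \<Rightarrow> 'a"
    and ms :: "nat list"
  assumes alg: "is_algebra smult"
    and sixth: "\<exists>u::'r. 6 * u = 1"
    and k_pos: "length ms > 0"
    and odd_pos: "\<forall>m \<in> set ms. odd m \<and> m > 0"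
  shows "set_product smult (map (Tn smult) ms)
           \<subseteq> Tn smult (sum_list ms - length ms + 1)"
proof -
  interpret assoc_algebra_third smult
  proof unfold_locales
    from sixth obtain u :: 'r where "6 * u = 1" ..
    then show "\<exists>u::'r. 3 * u = 1"
      by (intro exI[of _ "2 * u"]) (simp add: mult.assoc[symmetric])
  qed (fact alg)
  let ?N = "sum_list ms - length ms + 1"
  have "submod smult (T ?N)"
    using alg_ideal_Tn unfolding alg_ideal_def submod_def by blast
  moreover have "lprod xs \<in> T ?N" if "length xs = length ms" "\<forall>i<length ms. xs ! i \<in> T (ms ! i)" for xs
    using lprod_mem_Tn[of xs ms] that k_pos odd_pos by (simp add: list_all2_conv_all_nth)
  ultimately show ?thesis
    unfolding set_product_def by auto
qed

end
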